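(* Assume the standing setting described in the context. Let $(N_{1,n},V_{1,n})$ and $(N_{2,n},V_{2,n})$ be deterministic sequences of norms and polar angles, let $W_{1,n}:=V_{1,n}$, $W_{2,n}:=\pi-V_{2,n}$, and suppose $(N_{i,n},W_{i,n})\to\mathrm{Pole}_i$ for $i\in\{1,2\}$. Then, with $p(r,\varphi):=r(\cos\varphi,\sin\varphi)$ and $F_n:=W_{1,n}+W_{2,n}$, $$\big|p(N_{1,n},V_{1,n})-p(N_{2,n},V_{2,n})\big|=N_{1,n}+N_{2,n}-\frac a4F_n^2+\widetilde R_n,$$ where $\widetilde R_n=O(F_n^4)+A_n+B_n+C_n+D_n$ with $A_n=\frac14\big(\frac12F_n^2+O(F_n^4)\big)(a-N_{1,n})$, $B_n=\frac14\big(\frac12F_n^2+O(F_n^4)\big)(a-N_{2,n})$, $C_n=-\frac{a}{16}\big(\frac12F_n^2+O(F_n^4)\big)^2$, $D_n=O\Big((a-N_{1,n})^2+(a-N_{2,n})^2+\big(\frac12F_n^2+O(F_n^4)\big)^2\Big)$, as $n\to\infty$.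
   Context: Standing setting: $E\subset\mathbb{R}^2$ is compact, $a>0$, $\mathrm{diam}(E)=2a$, $\inf\{x:(x,y)\in E\}=-a$, $\sup\{x:(x,y)\in E\}=a$, and $E$ is the support of a Lebesgue density $f$ satisfying the paper's regularity assumptions near $(\pm a,0)$. $Q_1,\dots,Q_4$ are the open quadrants, $Q_1=\{x>0,y>0\}$, numbered anticlockwise, and $E_i:=E\cap Q_i$. Polar angles take values in $[0,2\pi)$. For $i\in\{1,2,3,4\}$, given sequences $N_{i,n}$ (norm) and $V_{i,n}$ (polar angle), set $W_{1,n}=V_{1,n}$, $W_{2,n}=\pi-V_{2,n}$, $W_{3,n}=V_{3,n}-\pi$, $W_{4,n}=2\pi-V_{4,n}$; one writes $(N_{i,n},W_{i,n})\to\mathrm{Pole}_i$ if $N_{i,n}\ge0$, $W_{i,n}\ge0$ for every $n$, the point $p(N_{i,n},V_{i,n})$ lies in $E_i$, and these points converge to $(a,0)$ if $i\in\{1,4\}$, resp. to $(-a,0)$ if $i\in\{2,3\}$. *)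

theory Defs
  imports "HOL-Analysis.Analysis" "HOL-Library.Landau_Symbols"
begin

text \<open>Points of the plane are pairs of reals; the norm on real \<times> real is Euclidean.\<close>

definition polar_pt :: "real \<Rightarrow> real \<Rightarrow> real \<times> real" where
  "polar_pt r \<phi> = (r * cos \<phi>, r * sin \<phi>)"

definition quadrant :: "nat \<Rightarrow> (real \<times> real) set" where
  "quadrant i =
     (if i = 1 then {(x, y). x > 0 \<and> y > 0}
      else if i = 2 then {(x, y). x < 0 \<and> y > 0}
      else if i = 3 then {(x, y). x < 0 \<and> y < 0}
      else if i = 4 then {(x, y). x > 0 \<and> y < 0}
      else {})"

definition W_angle :: "nat \<Rightarrow> real \<Rightarrow> real" where
  "W_angle i v =
     (if i = 1 then v
      else if i = 2 then pi - v
      else if i = 3 then v - pi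
      else 2 * pi - v)"

definition to_pole :: "(real \<times> real) set \<Rightarrow> real \<Rightarrow> nat \<Rightarrow> (nat \<Rightarrow> real) \<Rightarrow> (nat \<Rightarrow> real) \<Rightarrow> bool" where
  "to_pole E a i N V \<longleftrightarrow>
     (\<forall>n. N n \<ge> 0 \<and> W_angle i (V n) \<ge> 0 \<and> polar_pt (N n) (V n) \<in> E \<inter> quadrant i) \<and>
     (\<lambda>n. polar_pt (N n) (V n)) \<longlonglongrightarrow> (if i \<in> {1, 4} then (a, 0) else (-a, 0))"

definition density_support :: "(real \<times> real \<Rightarrow> real) \<Rightarrow> (real \<times> real) set" where
  "density_support f = {x. \<forall>e>0. (LINT y:ball x e|lborel. f y) > 0}"

definition is_density :: "(real \<times> real \<Rightarrow> real) \<Rightarrow> bool" where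
  "is_density f \<longleftrightarrow> (\<forall>x. f x \<ge> 0) \<and> integrable lborel f \<and> integral\<^sup>L lborel f = 1"

end

theory Submission
  imports Defs
begin

text \<open>
  Write \<open>S = N\<^sub>1 + N\<^sub>2\<close>, \<open>P = N\<^sub>1 N\<^sub>2\<close> and \<open>x = F/2\<close>. Since the two points lie on
  rays at angles \<open>V\<^sub>1\<close> and \<open>V\<^sub>2 = V\<^sub>1 + \<pi> - F\<close>, the law of cosines gives for their distance
  \<open>d\<^sup>2 = S\<^sup>2 - 4 P sin\<^sup>2 x\<close>, hence \<open>d = S - 2 P sin\<^sup>2 x / S - \<rho>\<close> with
  \<open>0 \<le> \<rho> \<le> S sin\<^sup>4 x / 2\<close>. Combining \<open>sin\<^sup>2 x = x\<^sup>2 + O(x\<^sup>4)\<close> with the fact that the harmonic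
  mean \<open>2P/S\<close> differs from \<open>a\<close> by at most \<open>|a - N\<^sub>1| + |a - N\<^sub>2|\<close>, the expansion holds with
  all \<open>O(F\<^sup>4)\<close> corrections equal to \<open>0\<close> and a remainder bounded by
  \<open>(a + 1)((a - N\<^sub>1)\<^sup>2 + (a - N\<^sub>2)\<^sup>2 + (F\<^sup>2/2)\<^sup>2)\<close> for every \<open>n\<close>; only \<open>N\<^sub>i > 0\<close> is needed.
\<close>

lemma dist_polar_pt_squared:
  "(dist (polar_pt r1 \<phi>1) (polar_pt r2 \<phi>2))\<^sup>2 = r1\<^sup>2 + r2\<^sup>2 - 2 * r1 * r2 * cos (\<phi>1 - \<phi>2)"
proof -
  have "(dist (polar_pt r1 \<phi>1) (polar_pt r2 \<phi>2))\<^sup>2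
      = (r1 * cos \<phi>1 - r2 * cos \<phi>2)\<^sup>2 + (r1 * sin \<phi>1 - r2 * sin \<phi>2)\<^sup>2"
    by (simp add: polar_pt_def dist_Pair_Pair dist_real_def)
  also have "\<dots> = r1\<^sup>2 * ((cos \<phi>1)\<^sup>2 + (sin \<phi>1)\<^sup>2) + r2\<^sup>2 * ((cos \<phi>2)\<^sup>2 + (sin \<phi>2)\<^sup>2)
      - 2 * r1 * r2 * (cos \<phi>1 * cos \<phi>2 + sin \<phi>1 * sin \<phi>2)"
    unfolding power2_eq_square by algebra
  finally show ?thesis
    by (simp only: cos_diff sin_cos_squared_add2 mult_1_right)
qed

lemma polar_pt_in_quadrant_imp_pos:
  assumes "polar_pt r \<phi> \<in> quadrant i" and "r \<ge> 0"
  shows "r > 0"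
  using assms by (cases "r = 0") (auto simp: polar_pt_def quadrant_def split: if_splits)

lemma sin_squared_le: "(sin (x::real))\<^sup>2 \<le> x\<^sup>2"
  by (metis abs_ge_zero abs_sin_x_le_abs_x power2_abs power_mono)

lemma square_sub_sin_squared_le: "(x::real)\<^sup>2 - (sin x)\<^sup>2 \<le> x ^ 4 / 3"
proof -
  have "\<bar>sin x - x\<bar> \<le> \<bar>x\<bar> ^ 3 / 6"
    using Maclaurin_sin_bound[of x 3] by (simp add: sin_coeff_def eval_nat_numeral)
  then have "\<bar>x\<bar> - \<bar>sin x\<bar> \<le> \<bar>x\<bar> ^ 3 / 6"
    by linarith
  moreover have "\<bar>sin x\<bar> \<le> \<bar>x\<bar>"
    by (rule abs_sin_x_le_abs_x)
  ultimately have "(\<bar>x\<bar> - \<bar>sin x\<bar>) * (\<bar>x\<bar> + \<bar>sin x\<bar>) \<le> (\<bar>x\<bar> ^ 3 / 6) * (2 * \<bar>x\<bar>)"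
    by (intro mult_mono) auto
  then show ?thesis
    by (simp add: algebra_simps power2_eq_square eval_nat_numeral)
qed

lemma sqrt_first_order_remainder:
  fixes S d t :: real
  assumes "S > 0" and "d \<ge> 0" and "d\<^sup>2 = S\<^sup>2 - t"
  shows "0 \<le> S - d - t / (2 * S)" and "S - d - t / (2 * S) \<le> t\<^sup>2 / (2 * S ^ 3)"
proof -
  have Sd: "S + d > 0" using assms by linarith
  have "(S - d) * (S + d) = t"
    using assms(3) by (simp add: algebra_simps power2_eq_square)
  then have Smd: "S - d = t / (S + d)"
    using Sd by (simp add: field_simps)
  have "S - d - t / (2 * S) = t / (S + d) - t / (2 * S)"
    using Smd by simp
  also have "\<dots> = t * (S - d) / (2 * S * (S + d))"
    using assms(1) Sd by (simp add: field_simps)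
  also have "\<dots> = t\<^sup>2 / (2 * S * (S + d)\<^sup>2)"
    unfolding Smd using assms(1) Sd by (simp add: power2_eq_square)
  finally have rem: "S - d - t / (2 * S) = t\<^sup>2 / (2 * S * (S + d)\<^sup>2)" .
  show "0 \<le> S - d - t / (2 * S)"
    unfolding rem using assms(1) by simp
  have "2 * S ^ 3 \<le> 2 * S * (S + d)\<^sup>2"
    using assms(1,2) by (simp add: power2_eq_square eval_nat_numeral mult_left_mono mult_mono)
  then show "S - d - t / (2 * S) \<le> t\<^sup>2 / (2 * S ^ 3)"
    unfolding rem using assms(1) Sd by (intro divide_left_mono) auto
qed

lemma abs_sub_harmonic_mean_le:
  fixes a n1 n2 :: real
  assumes "n1 > 0" and "n2 > 0"
  shows "\<bar>a - 2 * n1 * n2 / (n1 + n2)\<bar> \<le> \<bar>a - n1\<bar> + \<bar>a - n2\<bar>"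
proof -
  have S: "n1 + n2 > 0" using assms by simp
  have "\<bar>(a - n1) * n2 + (a - n2) * n1\<bar> \<le> \<bar>a - n1\<bar> * n2 + \<bar>a - n2\<bar> * n1"
    using assms abs_triangle_ineq[of "(a - n1) * n2" "(a - n2) * n1"] by (simp only: abs_mult abs_of_pos)
  also have "\<dots> \<le> (\<bar>a - n1\<bar> + \<bar>a - n2\<bar>) * (n1 + n2)"
    using assms by (simp add: algebra_simps)
  finally have "\<bar>(a - n1) * n2 + (a - n2) * n1\<bar> \<le> (\<bar>a - n1\<bar> + \<bar>a - n2\<bar>) * (n1 + n2)" .
  moreover have "a - 2 * n1 * n2 / (n1 + n2) = ((a - n1) * n2 + (a - n2) * n1) / (n1 + n2)"
    using S by (simp add: field_simps)
  ultimately show ?thesis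
    using S by (simp add: divide_le_eq)
qed

lemma dist_polar_pt_expansion:
  fixes a n1 n2 v1 v2 :: real
  assumes "a \<ge> 0" and "n1 > 0" and "n2 > 0"
  defines "x \<equiv> (v1 + (pi - v2)) / 2"
  shows "\<bar>dist (polar_pt n1 v1) (polar_pt n2 v2) - (n1 + n2) + a * x\<^sup>2\<bar>
           \<le> 4/3 * a * x ^ 4 + 3/2 * x\<^sup>2 * (\<bar>a - n1\<bar> + \<bar>a - n2\<bar>)"
proof -
  define d where "d = dist (polar_pt n1 v1) (polar_pt n2 v2)"
  define S where "S = n1 + n2"
  define P where "P = n1 * n2"
  define s where "s = (sin x)\<^sup>2"
  define E where "E = \<bar>a - n1\<bar> + \<bar>a - n2\<bar>"
  define \<rho> where "\<rho> = S - d - 4 * P * s / (2 * S)"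
  have S0: "S > 0" and P0: "P \<ge> 0"
    using assms by (simp_all add: S_def P_def)
  have "v1 - v2 = 2 * x - pi"
    by (simp add: x_def field_simps)
  then have "cos (v1 - v2) = - cos (2 * x)"
    by (simp add: cos_diff)
  then have cos_eq: "cos (v1 - v2) = 2 * s - 1"
    by (simp add: cos_double_sin s_def)
  have d2: "d\<^sup>2 = S\<^sup>2 - 4 * P * s"
    unfolding d_def dist_polar_pt_squared cos_eq S_def P_def by (simp add: algebra_simps power2_eq_square)
  have \<rho>0: "0 \<le> \<rho>" and \<rho>_le: "\<rho> \<le> (4 * P * s)\<^sup>2 / (2 * S ^ 3)"
    using sqrt_first_order_remainder[OF S0 _ d2] by (simp_all add: \<rho>_def d_def)
  have s0: "0 \<le> s" and s_le: "s \<le> x\<^sup>2" and s_approx: "x\<^sup>2 - s \<le> x ^ 4 / 3"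
    using sin_squared_le square_sub_sin_squared_le by (simp_all add: s_def)
  have s_le1: "s \<le> 1"
    by (simp add: s_def abs_square_le_1)
  have "d - S + a * x\<^sup>2 = a * (x\<^sup>2 - s) + s * (a - 2 * P / S) - \<rho>"
    using S0 by (simp add: \<rho>_def field_simps)
  moreover have "\<bar>a * (x\<^sup>2 - s)\<bar> \<le> a * x ^ 4 / 3"
    using mult_left_mono[OF s_approx assms(1)] assms(1) s_le by (simp add: abs_of_nonneg)
  moreover have "\<bar>s * (a - 2 * P / S)\<bar> \<le> x\<^sup>2 * E"
    using abs_sub_harmonic_mean_le[OF assms(2,3), of a] s0 s_le
    unfolding S_def P_def E_def by (simp add: abs_mult mult_mono)
  moreover have "\<rho> \<le> a * x ^ 4 + x\<^sup>2 * E / 2"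
  proof -
    have "4 * P \<le> S\<^sup>2"
      using power2_diff[of n1 n2] zero_le_power2[of "n1 - n2"]
      by (simp add: S_def P_def power2_sum)
    then have "(4 * P)\<^sup>2 \<le> (S\<^sup>2)\<^sup>2"
      using P0 by (intro power_mono) simp_all
    then have "(4 * P * s)\<^sup>2 / (2 * S ^ 3) \<le> (S\<^sup>2)\<^sup>2 * s\<^sup>2 / (2 * S ^ 3)"
      unfolding power_mult_distrib[of "4 * P" s] using S0 by (intro divide_right_mono mult_right_mono) simp_all
    also have "\<dots> = S * s\<^sup>2 / 2"
      using S0 by (simp add: field_simps eval_nat_numeral)
    also have "\<dots> \<le> (2 * a + E) * s\<^sup>2 / 2"
      unfolding S_def E_def by (intro divide_right_mono mult_right_mono) auto
    also have "\<dots> \<le> a * x ^ 4 + x\<^sup>2 * E / 2"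
    proof -
      have "s\<^sup>2 \<le> (x\<^sup>2)\<^sup>2"
        using power_mono[OF s_le s0] .
      moreover have "s\<^sup>2 \<le> x\<^sup>2"
        using mult_left_mono[OF s_le1 s0] s_le by (simp add: power2_eq_square)
      moreover have "E \<ge> 0"
        by (simp add: E_def)
      ultimately have "a * s\<^sup>2 \<le> a * x ^ 4" and "s\<^sup>2 * E \<le> x\<^sup>2 * E"
        using assms(1) by (auto simp flip: power_mult intro: mult_left_mono mult_right_mono)
      moreover have "(2 * a + E) * s\<^sup>2 / 2 = a * s\<^sup>2 + s\<^sup>2 * E / 2"
        by (simp add: field_simps)
      ultimately show ?thesis
        by linarith
    qed
    finally show ?thesis
      using \<rho>_le by linarith
  qed
  ultimately show ?thesis
    unfolding d_def[symmetric] S_def[symmetric] E_def[symmetric] using \<rho>0 by linarith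
qed

lemma dist_polar_pt_second_order:
  fixes a n1 n2 v1 v2 :: real
  assumes "a \<ge> 0" and "n1 > 0" and "n2 > 0"
  defines "F \<equiv> v1 + (pi - v2)"
  shows "\<bar>dist (polar_pt n1 v1) (polar_pt n2 v2)
            - (n1 + n2 - a / 4 * F\<^sup>2 + 1/4 * (F\<^sup>2 / 2) * (a - n1) + 1/4 * (F\<^sup>2 / 2) * (a - n2)
               - a / 16 * (F\<^sup>2 / 2)\<^sup>2)\<bar>
         \<le> (a + 1) * ((a - n1)\<^sup>2 + (a - n2)\<^sup>2 + (F\<^sup>2 / 2)\<^sup>2)"
proof -
  define x where "x = F / 2"
  define d where "d = dist (polar_pt n1 v1) (polar_pt n2 v2)"
  define e1 where "e1 = a - n1"
  define e2 where "e2 = a - n2"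
  have F: "F = 2 * x"
    by (simp add: x_def)
  have first: "\<bar>d - (n1 + n2) + a * x\<^sup>2\<bar> \<le> 4/3 * a * x ^ 4 + 3/2 * x\<^sup>2 * (\<bar>e1\<bar> + \<bar>e2\<bar>)"
    using dist_polar_pt_expansion[OF assms(1-3), of v1 v2]
    by (simp add: d_def e1_def e2_def x_def F_def)
  have amgm: "2 * (x\<^sup>2 * \<bar>e\<bar>) \<le> x ^ 4 + e\<^sup>2" for e :: real
    using zero_le_power2[of "x\<^sup>2 - \<bar>e\<bar>"] by (simp add: power2_diff flip: power_mult)
  have x4: "x ^ 4 \<ge> 0"
    by (simp add: zero_le_even_power)
  have "d - (n1 + n2 - a / 4 * F\<^sup>2 + 1/4 * (F\<^sup>2 / 2) * (a - n1) + 1/4 * (F\<^sup>2 / 2) * (a - n2)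
               - a / 16 * (F\<^sup>2 / 2)\<^sup>2)
        = (d - (n1 + n2) + a * x\<^sup>2) - x\<^sup>2 * e1 / 2 - x\<^sup>2 * e2 / 2 + a * x ^ 4 / 4"
    by (simp add: F e1_def e2_def power_mult_distrib algebra_simps flip: power_mult)
  also have "\<bar>\<dots>\<bar> \<le> 4/3 * a * x ^ 4 + 3/2 * x\<^sup>2 * (\<bar>e1\<bar> + \<bar>e2\<bar>)
                    + x\<^sup>2 * \<bar>e1\<bar> / 2 + x\<^sup>2 * \<bar>e2\<bar> / 2 + a * x ^ 4 / 4"
  proof -
    have tri: "\<bar>A - B / 2 - C / 2 + D\<bar> \<le> \<bar>A\<bar> + \<bar>B\<bar> / 2 + \<bar>C\<bar> / 2 + \<bar>D\<bar>" for A B C D :: real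
      by arith
    have abs_scale: "\<bar>x\<^sup>2 * e\<bar> = x\<^sup>2 * \<bar>e\<bar>" for e :: real
      by (simp add: abs_mult)
    show ?thesis
      using tri[of "d - (n1 + n2) + a * x\<^sup>2" "x\<^sup>2 * e1" "x\<^sup>2 * e2" "a * x ^ 4 / 4"]
        abs_scale[of e1] abs_scale[of e2] first mult_nonneg_nonneg[OF assms(1) x4]
      by linarith
  qed
  also have "\<dots> = 19/12 * (a * x ^ 4) + 2 * (x\<^sup>2 * \<bar>e1\<bar>) + 2 * (x\<^sup>2 * \<bar>e2\<bar>)"
    by (simp add: field_simps)
  also have "\<dots> \<le> (a + 1) * (e1\<^sup>2 + e2\<^sup>2 + 4 * x ^ 4)"
  proof -
    have "(a + 1) * (e1\<^sup>2 + e2\<^sup>2 + 4 * x ^ 4) = a * e1\<^sup>2 + a * e2\<^sup>2 + 4 * (a * x ^ 4) + e1\<^sup>2 + e2\<^sup>2 + 4 * x ^ 4"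
      by (simp add: algebra_simps)
    then show ?thesis
      using amgm[of e1] amgm[of e2] x4 mult_nonneg_nonneg[OF assms(1) x4]
        mult_nonneg_nonneg[OF assms(1) zero_le_power2[of e1]]
        mult_nonneg_nonneg[OF assms(1) zero_le_power2[of e2]]
      by linarith
  qed
  finally show ?thesis
    by (simp add: F e1_def e2_def d_def power_mult_distrib flip: power_mult)
qed

lemma to_pole_norm_pos:
  assumes "to_pole E a i N V"
  shows "N n > 0"
  using assms polar_pt_in_quadrant_imp_pos unfolding to_pole_def by blast

theorem lemma4:
  fixes E :: "(real \<times> real) set" and a :: real and f :: "real \<times> real \<Rightarrow> real"
    and N1 V1 N2 V2 :: "nat \<Rightarrow> real"
  assumes "compact E" and "a > 0" and "diameter E = 2 * a"
    and "Inf (fst ` E) = - a" and "Sup (fst ` E) = a"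
    and "is_density f" and "E = density_support f"
    and "\<And>n. V1 n \<in> {0..<2 * pi}" and "\<And>n. V2 n \<in> {0..<2 * pi}"
    and "to_pole E a 1 N1 V1" and "to_pole E a 2 N2 V2"
  shows "\<exists>r0 r1 r2 r3 r4 D :: nat \<Rightarrow> real.
     (let F = (\<lambda>n. W_angle 1 (V1 n) + W_angle 2 (V2 n)) in
       r0 \<in> O(\<lambda>n. F n ^ 4) \<and> r1 \<in> O(\<lambda>n. F n ^ 4) \<and> r2 \<in> O(\<lambda>n. F n ^ 4) \<and>
       r3 \<in> O(\<lambda>n. F n ^ 4) \<and> r4 \<in> O(\<lambda>n. F n ^ 4) \<and>
       D \<in> O(\<lambda>n. (a - N1 n)\<^sup>2 + (a - N2 n)\<^sup>2 + (F n ^ 2 / 2 + r4 n)\<^sup>2) \<and>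
       (\<forall>n. dist (polar_pt (N1 n) (V1 n)) (polar_pt (N2 n) (V2 n)) =
            N1 n + N2 n - a / 4 * F n ^ 2
            + (r0 n
               + 1/4 * (F n ^ 2 / 2 + r1 n) * (a - N1 n)
               + 1/4 * (F n ^ 2 / 2 + r2 n) * (a - N2 n)
               - a / 16 * (F n ^ 2 / 2 + r3 n)\<^sup>2
               + D n)))"
proof -
  define F where "F n = W_angle 1 (V1 n) + W_angle 2 (V2 n)" for n
  define D where "D n = dist (polar_pt (N1 n) (V1 n)) (polar_pt (N2 n) (V2 n))
      - (N1 n + N2 n - a / 4 * F n ^ 2 + 1/4 * (F n ^ 2 / 2) * (a - N1 n)
         + 1/4 * (F n ^ 2 / 2) * (a - N2 n) - a / 16 * (F n ^ 2 / 2)\<^sup>2)" for n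
  have "\<bar>D n\<bar> \<le> (a + 1) * ((a - N1 n)\<^sup>2 + (a - N2 n)\<^sup>2 + (F n ^ 2 / 2)\<^sup>2)" for n
    using dist_polar_pt_second_order[of a "N1 n" "N2 n" "V1 n" "V2 n"] assms(2)
      to_pole_norm_pos[OF assms(10)] to_pole_norm_pos[OF assms(11)]
    by (simp add: D_def F_def W_angle_def)
  then have "D \<in> O(\<lambda>n. (a - N1 n)\<^sup>2 + (a - N2 n)\<^sup>2 + (F n ^ 2 / 2)\<^sup>2)"
    by (intro bigoI[where c = "a + 1"] always_eventually) simp
  then show ?thesis
    unfolding Let_def F_def[symmetric]
    by (intro exI[of _ "\<lambda>_. 0"] exI[of _ D]) (simp add: D_def)
qed

end
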